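(* Let $s\ge 2$ and $0\le v\le s$ be integers. Consider all numbers $S(v,d,n)$ with $d,n$ nonnegative integers and $v+d+n=s$. Then $$\sum_{\substack{d,n\ge 0\\ d+n=s-v}} S(v,d,n)=\begin{cases}\binom{s-1}{2} & \text{if } v=0,\\[2pt] \binom{s-1}{v}+\binom{s-1}{v+2} & \text{if } v\ge 1.\end{cases}$$ Moreover, the number of pairs $(d,n)$ with $d+n=s-v$ for which $S(v,d,n)\neq 0$ is $s-2$ if $v=0$ and $s-v$ if $v\ge 1$.
   Context: Binomial convention: for integers $M,m$, $\binom{M}{m}=\frac{M!}{m!(M-m)!}$ if $0\le m\le M$, and $\binom{M}{m}=0$ otherwise (in particular whenever $M<0$ or $m<0$ or $m>M$). For nonnegative integers $v,d,n$ the hypersolid number is defined by $$S(v,d,n)=\binom{v+n-2}{v-1}+d\binom{v+n-2}{v}.$$ (So $S(0,d,n)=d$ for $n\ge2$ and $0$ for $n\in\{0,1\}$; $S(1,d,n)=1+d(n-1)$ for $n\ge1$ and $S(1,d,0)=0$; $S(v,d,0)=0$.) *)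

theory Defs
  imports Main
begin

definition ibinom :: "int \<Rightarrow> int \<Rightarrow> nat" where
  "ibinom M m = (if 0 \<le> m \<and> m \<le> M then nat M choose nat m else 0)"

definition hypersolid :: "nat \<Rightarrow> nat \<Rightarrow> nat \<Rightarrow> nat" where
  "hypersolid v d n =
     ibinom (int v + int n - 2) (int v - 1) + d * ibinom (int v + int n - 2) (int v)"

end

theory Submission
  imports Defs
begin

(* The pairs (d, n) with d + n = m (where m = s - v) form the
   antidiagonal {(m - n, n) | n \<le> m}, so both the sum and the count reduce to
   statements about the single index n \<le> m.
   For v = 0 the hypersolid number is d when n \<ge> 2 and 0 otherwise, so the sum
   is \<Sum>_{2 \<le> n \<le> m} (m - n) = C(m-1, 2) and exactly the m - 1 indices n \<ge> 2
   contribute.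
   For v = w + 1 the term with n = 0 vanishes and for n = k + 1 one gets
   C(w+k, w) + (m-k-1) C(w+k, w+1), which is positive.  Summing over k < m with
   the hockey-stick identity and its weighted version gives
   C(w+m, w+1) + C(w+m, w+3) = C(s-1, v) + C(s-1, v+2), and exactly the m
   indices n \<ge> 1 contribute. *)

lemma hypersolid_dim_zero: "hypersolid 0 d n = (if 2 \<le> n then d else 0)"
  by (auto simp: hypersolid_def ibinom_def)

lemma hypersolid_Suc_index_zero: "hypersolid (Suc w) d 0 = 0"
  by (auto simp: hypersolid_def ibinom_def)

lemma hypersolid_Suc_Suc:
  "hypersolid (Suc w) d (Suc k) = ((w + k) choose w) + d * ((w + k) choose (w + 1))"
proof -
  have top: "int (Suc w) + int (Suc k) - 2 = int (w + k)" by simp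
  have low: "int (Suc w) - 1 = int w" by simp
  have first: "ibinom (int (w + k)) (int w) = (w + k) choose w"
    unfolding ibinom_def nat_int by simp
  have second: "ibinom (int (w + k)) (int (Suc w)) = (w + k) choose (w + 1)"
    unfolding ibinom_def nat_int by (auto simp: binomial_eq_0)
  show ?thesis by (simp only: hypersolid_def top low first second)
qed

lemma hypersolid_Suc_pos: "n \<noteq> 0 \<Longrightarrow> hypersolid (Suc w) d n \<noteq> 0"
  by (cases n) (auto simp: hypersolid_Suc_Suc)

lemma hockey_stick: "(\<Sum>k<m. (w + k) choose w) = (w + m) choose (w + 1)"
  by (induction m) (auto simp: binomial_Suc_Suc)

lemma hockey_stick_Suc: "(\<Sum>k<m. (w + k) choose (w + 1)) = (w + m) choose (w + 2)"
  by (induction m) (auto simp: binomial_Suc_Suc numeral_2_eq_2)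

lemma weighted_hockey_stick:
  "(\<Sum>k<m. (m - (k + 1)) * ((w + k) choose (w + 1))) = (w + m) choose (w + 3)"
proof (induction m)
  case 0
  then show ?case by simp
next
  case (Suc m)
  have "(\<Sum>k<Suc m. (Suc m - (k + 1)) * ((w + k) choose (w + 1)))
      = (\<Sum>k<m. (m - k) * ((w + k) choose (w + 1)))"
    by simp
  also have "\<dots> = (\<Sum>k<m. (m - (k + 1)) * ((w + k) choose (w + 1)) + ((w + k) choose (w + 1)))"
  proof (rule sum.cong)
    fix k assume "k \<in> {..<m}"
    then have "m - k = (m - (k + 1)) + 1" by simp
    then show "(m - k) * ((w + k) choose (w + 1))
        = (m - (k + 1)) * ((w + k) choose (w + 1)) + ((w + k) choose (w + 1))"
      by (simp only: add_mult_distrib)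
  qed simp
  also have "\<dots> = ((w + m) choose (w + 3)) + ((w + m) choose (w + 2))"
    using Suc.IH hockey_stick_Suc by (simp add: sum.distrib)
  also have "\<dots> = (w + Suc m) choose (w + 3)"
    by (simp add: binomial_Suc_Suc numeral_3_eq_3 numeral_2_eq_2)
  finally show ?case .
qed

lemma sum_tail_differences: "(\<Sum>n\<le>m. if 2 \<le> n then m - n else 0) = (m - 1) choose 2"
proof (induction m)
  case 0
  then show ?case by simp
next
  case (Suc m)
  have "(\<Sum>n\<le>Suc m. if 2 \<le> n then Suc m - n else 0)
      = (\<Sum>n\<le>m. if 2 \<le> n then Suc m - n else 0)"
    by simp
  also have "\<dots> = (\<Sum>n\<le>m. (if 2 \<le> n then m - n else 0) + (if 2 \<le> n then 1 else 0))"
    by (rule sum.cong) auto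
  also have "\<dots> = ((m - 1) choose 2) + card {2..m}"
    using Suc.IH
    by (simp add: sum.distrib sum.If_cases Int_def atLeastAtMost_def atLeast_def
        atMost_def conj_commute)
  also have "\<dots> = (Suc m - 1) choose 2"
    by (cases m) (auto simp: binomial_Suc_Suc numeral_2_eq_2)
  finally show ?case .
qed

lemma antidiagonal_param: "{(d, n). d + n = (m::nat)} = (\<lambda>n. (m - n, n)) ` {..m}"
  by (auto simp: image_iff)

lemma antidiagonal_param_inj: "inj_on (\<lambda>n::nat. (m - n, n)) A"
  by (auto simp: inj_on_def)

lemma sum_antidiagonal:
  "(\<Sum>(d, n) \<in> {(d, n). d + n = (m::nat)}. f d n) = (\<Sum>n\<le>m. f (m - n) n)"
  unfolding antidiagonal_param by (subst sum.reindex[OF antidiagonal_param_inj]) simp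

lemma card_antidiagonal:
  "card {(d, n). d + n = (m::nat) \<and> P d n} = card {n. n \<le> m \<and> P (m - n) n}"
proof -
  have "{(d, n). d + n = m \<and> P d n} = (\<lambda>n. (m - n, n)) ` {n. n \<le> m \<and> P (m - n) n}"
    by (auto simp: image_iff)
  then show ?thesis by (simp add: card_image[OF antidiagonal_param_inj])
qed

lemma dim_zero_sum: "(\<Sum>n\<le>m. hypersolid 0 (m - n) n) = (m - 1) choose 2"
  using sum_tail_differences[of m] by (simp add: hypersolid_dim_zero)

lemma dim_zero_card: "card {n. n \<le> m \<and> hypersolid 0 (m - n) n \<noteq> 0} = m - 2"
proof -
  have "{n. n \<le> m \<and> hypersolid 0 (m - n) n \<noteq> 0} = {2..<m}"
    by (auto simp: hypersolid_dim_zero)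
  then show ?thesis by simp
qed

lemma dim_Suc_sum:
  "(\<Sum>n\<le>m. hypersolid (Suc w) (m - n) n) = ((w + m) choose (w + 1)) + ((w + m) choose (w + 3))"
proof -
  have "(\<Sum>n\<le>m. hypersolid (Suc w) (m - n) n) = (\<Sum>n<Suc m. hypersolid (Suc w) (m - n) n)"
    by (simp only: lessThan_Suc_atMost)
  also have "\<dots> = (\<Sum>k<m. hypersolid (Suc w) (m - Suc k) (Suc k))"
    by (subst sum.lessThan_Suc_shift) (simp add: hypersolid_Suc_index_zero)
  also have "\<dots> = (\<Sum>k<m. ((w + k) choose w) + (m - (k + 1)) * ((w + k) choose (w + 1)))"
    by (simp add: hypersolid_Suc_Suc)
  also have "\<dots> = ((w + m) choose (w + 1)) + ((w + m) choose (w + 3))"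
    by (simp only: sum.distrib hockey_stick weighted_hockey_stick)
  finally show ?thesis .
qed

lemma dim_Suc_card: "card {n. n \<le> m \<and> hypersolid (Suc w) (m - n) n \<noteq> 0} = m"
proof -
  have "{n. n \<le> m \<and> hypersolid (Suc w) (m - n) n \<noteq> 0} = {1..m}"
  proof (intro set_eqI iffI)
    fix n assume "n \<in> {n. n \<le> m \<and> hypersolid (Suc w) (m - n) n \<noteq> 0}"
    then show "n \<in> {1..m}"
      using hypersolid_Suc_index_zero by (cases n) auto
  qed (use hypersolid_Suc_pos in auto)
  then show ?thesis by simp
qed

theorem theorem1:
  fixes s v :: nat
  assumes "s \<ge> 2" and "v \<le> s"
  shows "((\<Sum>(d, n) \<in> {(d, n). d + n = s - v}. hypersolid v d n) =
           (if v = 0 then ((s - 1) choose 2) else ((s - 1) choose v) + ((s - 1) choose (v + 2))))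
       \<and> (card {(d, n). d + n = s - v \<and> hypersolid v d n \<noteq> 0} =
           (if v = 0 then s - 2 else s - v))"
proof -
  define m where "m = s - v"
  have sum_eq: "(\<Sum>(d, n) \<in> {(d, n). d + n = m}. hypersolid v d n)
      = (\<Sum>n\<le>m. hypersolid v (m - n) n)"
    by (rule sum_antidiagonal)
  have card_eq: "card {(d, n). d + n = m \<and> hypersolid v d n \<noteq> 0}
      = card {n. n \<le> m \<and> hypersolid v (m - n) n \<noteq> 0}"
    by (rule card_antidiagonal)
  show ?thesis
  proof (cases v)
    case 0
    then show ?thesis
      using sum_eq card_eq dim_zero_sum[of m] dim_zero_card[of m] m_def by simp
  next
    case (Suc w)
    have "s - 1 = w + m" using Suc assms m_def by simp
    then show ?thesis
      using Suc sum_eq card_eq dim_Suc_sum[where w = w and m = m] dim_Suc_card[where w = w and m = m] m_def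
      by (simp add: numeral_3_eq_3)
  qed
qed

end
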